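(* Let $q$ be a prime power and let $1 \le h \le T$ be integers. Let $\mathbf{G}$ be a random $h\times h$ matrix over $\mathbb{F}_q$ with an arbitrary distribution, and let $p(r) = \Pr[h - \operatorname{rank}\mathbf{G} = r]$, $r = 0,\dots,h$, be its rank deficiency distribution. Let $U \in \mathcal{P}(\mathbb{F}_q^T,h)$, and let $\mathbf{X}$ be an $h\times T$ matrix over $\mathbb{F}_q$ chosen uniformly at random from the set of all ordered bases of $U$ (i.e., all $h\times T$ matrices whose rows span $U$; there are $\prod_{i=1}^h (q^h - q^{i-1})$ of them), independently of $\mathbf{G}$. Let $\mathbf{Y} = \mathbf{G}\mathbf{X}$. Then for every subspace $V$ of $\mathbb{F}_q^T$ with $\dim V \le h$, $$\Pr\big[\langle \mathbf{Y}\rangle = V\big] = \begin{cases} \dfrac{p(h-\dim V)}{\binom{h}{\dim V}_q}, & \text{if } V \subseteq U,\\[2mm] 0, & \text{otherwise.}\end{cases}$$ In particular, this transition probability depends only on $p$, $h$, $\dim V$, and whether $V\subseteq U$, and not otherwise on the distribution of $\mathbf{G}$.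
   Context: $\mathbb{F}_q$ is the finite field with $q$ elements. For a matrix $M$ over $\mathbb{F}_q$, $\langle M\rangle$ denotes the subspace spanned by its rows. $\mathcal{P}(\mathbb{F}_q^T,k)$ denotes the Grassmannian, the set of all $k$-dimensional subspaces of $\mathbb{F}_q^T$. The $q$-ary Gaussian coefficient is $\binom{n}{\ell}_q = \prod_{i=0}^{\ell-1}\frac{q^{n-i}-1}{q^{\ell-i}-1}$, the number of $\ell$-dimensional subspaces of an $n$-dimensional vector space over $\mathbb{F}_q$ (with $\binom{n}{0}_q = 1$). *)

theory Defs
  imports "Jordan_Normal_Form.DL_Rank" "HOL-Probability.Probability_Mass_Function"
begin

definition gauss_binom :: "nat \<Rightarrow> nat \<Rightarrow> nat \<Rightarrow> real" where
  "gauss_binom q n l = (\<Prod>i<l. (real q ^ (n - i) - 1) / (real q ^ (l - i) - 1))"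

definition is_subspace :: "'a::field itself \<Rightarrow> nat \<Rightarrow> 'a Matrix.vec set \<Rightarrow> bool" where
  "is_subspace ty T W = VectorSpace.subspace class_ring W (module_vec ty T)"

definition sub_dim :: "'a::field itself \<Rightarrow> nat \<Rightarrow> 'a Matrix.vec set \<Rightarrow> nat" where
  "sub_dim ty T W = vectorspace.dim class_ring ((module_vec ty T)\<lparr>carrier := W\<rparr>)"

definition rowsp :: "nat \<Rightarrow> 'a::field mat \<Rightarrow> 'a Matrix.vec set" where
  "rowsp T M = vec_space.row_space T M"

definition mrank :: "nat \<Rightarrow> 'a::field mat \<Rightarrow> nat" where
  "mrank h M = vec_space.rank h M"

end

theory Submission
  imports Defs
begin

(* Everything is reduced to counting over the finite field F = 'a with q elements.
   For a fixed h x h matrix G, the probability that rowsp (G X) = V, for X uniform among the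
   ordered bases of U, is #{X. rowsp X = U, rowsp (G X) = V} / #{X. rowsp X = U}.
   Write S for the row space of G (the image of G^T), of dimension r = rank G.  Choosing a basis
   ws of S and completing it to a basis cs = us @ ws of F^h, the coordinate map
   X |-> [X^T c. c <- cs] identifies h x T matrices with h-tuples of vectors in F^T; the row
   space of X becomes the span of the whole tuple and the row space of G X the span of its last
   r entries.  Counting tuples that are ordered bases of U ending in an ordered basis of V gives
   (prod_{i<d} q^d - q^i) * (prod_{i<h-d} q^h - q^(d+i)) if V is a subspace of U with d = dim V = r,
   and 0 otherwise; dividing by the number prod_{i<h} (q^h - q^i) of ordered bases of U yields
   1 / [h choose d]_q.  Averaging over G proves the theorem. *)

section \<open>Cardinalities of finite vector and matrix spaces\<close>

text \<open>Vectors of length n over a finite type are the functions {0..<n} \<rightarrow> 'a.\<close>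
lemma card_carrier_vec:
  "card (carrier_vec n :: 'a::finite Matrix.vec set) = CARD('a) ^ n" (is ?card)
  and finite_carrier_vec: "finite (carrier_vec n :: 'a::finite Matrix.vec set)" (is ?fin)
proof -
  have "bij_betw (\<lambda>v. restrict (\<lambda>i. v $ i) {0..<n}) (carrier_vec n :: 'a Matrix.vec set)
          ({0..<n} \<rightarrow>\<^sub>E (UNIV::'a set))"
    by (rule bij_betwI[where g="\<lambda>f. Matrix.vec n f"]) (auto simp: fun_eq_iff PiE_def extensional_def)
  moreover have "card ({0..<n} \<rightarrow>\<^sub>E (UNIV::'a set)) = CARD('a) ^ n"
    by (simp add: card_PiE)
  ultimately show ?card ?fin using bij_betw_same_card bij_betw_finite finite_PiE by fastforce+
qed

text \<open>Likewise, m \<times> n matrices are the functions {0..<m} \<times> {0..<n} \<rightarrow> 'a; this fixes the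
  size of the domain of the coordinate map below.\<close>
lemma card_carrier_mat:
  "card (carrier_mat m n :: 'a::finite mat set) = CARD('a) ^ (m * n)"
proof -
  have "bij_betw (\<lambda>A. restrict (\<lambda>ij. A $$ ij) ({0..<m} \<times> {0..<n})) (carrier_mat m n :: 'a mat set)
          (({0..<m} \<times> {0..<n}) \<rightarrow>\<^sub>E (UNIV::'a set))"
    by (rule bij_betwI[where g="\<lambda>f. Matrix.mat m n f"]) (auto simp: fun_eq_iff PiE_def extensional_def)
  then show ?thesis by (simp add: bij_betw_same_card card_PiE card_cartesian_product)
qed

text \<open>A field has the two distinct elements 0 and 1.\<close>
lemma one_less_card_field: "1 < CARD('a::{finite,field})"
proof -
  have "card {0::'a, 1} \<le> CARD('a)" by (rule card_mono) auto
  then show ?thesis by simp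
qed

section \<open>Spans and independence of vector lists\<close>

definition lspan :: "nat \<Rightarrow> 'a::field Matrix.vec list \<Rightarrow> 'a Matrix.vec set" where
  "lspan n vs = (\<lambda>y. mat_of_cols n vs *\<^sub>v y) ` carrier_vec (length vs)"

text \<open>Elementary notion of a linear subspace of F^n, convenient for direct manipulation.\<close>
definition lin_subspace :: "nat \<Rightarrow> 'a::field Matrix.vec set \<Rightarrow> bool" where
  "lin_subspace n W \<longleftrightarrow> W \<subseteq> carrier_vec n \<and> 0\<^sub>v n \<in> W \<and> (\<forall>x\<in>W. \<forall>y\<in>W. x + y \<in> W)
     \<and> (\<forall>c x. x \<in> W \<longrightarrow> c \<cdot>\<^sub>v x \<in> W)"

lemma mult_mat_of_cols_Cons:
  fixes vs :: "'a::field Matrix.vec list"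
  assumes y: "y \<in> carrier_vec (Suc (length vs))" and u: "u \<in> carrier_vec n"
  shows "mat_of_cols n (u # vs) *\<^sub>v y
       = y $ 0 \<cdot>\<^sub>v u + mat_of_cols n vs *\<^sub>v Matrix.vec (length vs) (\<lambda>i. y $ Suc i)"
proof (rule eq_vecI)
  fix i assume "i < dim_vec (y $ 0 \<cdot>\<^sub>v u + mat_of_cols n vs *\<^sub>v Matrix.vec (length vs) (\<lambda>i. y $ Suc i))"
  hence i: "i < n" by simp
  have "(mat_of_cols n (u # vs) *\<^sub>v y) $ i = (\<Sum>j<Suc (length vs). mat_of_cols n (u # vs) $$ (i,j) * y $ j)"
    using i y by (simp add: scalar_prod_def atLeast0LessThan)
  also have "\<dots> = u $ i * y $ 0 + (\<Sum>j<length vs. mat_of_cols n vs $$ (i,j) * y $ Suc j)"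
    using i by (subst sum.lessThan_Suc_shift) (simp add: mat_of_cols_Cons_index_0 mat_of_cols_Cons_index_Suc)
  also have "\<dots> = (y $ 0 \<cdot>\<^sub>v u + mat_of_cols n vs *\<^sub>v Matrix.vec (length vs) (\<lambda>i. y $ Suc i)) $ i"
    using i u by (simp add: scalar_prod_def atLeast0LessThan ac_simps)
  finally show "(mat_of_cols n (u # vs) *\<^sub>v y) $ i
      = (y $ 0 \<cdot>\<^sub>v u + mat_of_cols n vs *\<^sub>v Matrix.vec (length vs) (\<lambda>i. y $ Suc i)) $ i" .
qed simp

text \<open>A span of k vectors is a finite set with at most q^k elements (the coefficient vectors).\<close>
lemma finite_lspan: "finite (lspan n (vs :: 'a::{finite,field} Matrix.vec list))"
  unfolding lspan_def by (intro finite_imageI finite_carrier_vec)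

lemma card_lspan_le: "card (lspan n (vs :: 'a::{finite,field} Matrix.vec list)) \<le> CARD('a) ^ length vs"
  unfolding lspan_def
  using card_image_le[OF finite_carrier_vec, of "\<lambda>y. mat_of_cols n vs *\<^sub>v y" "length vs"]
  by (simp add: card_carrier_vec)

lemma lspan_Nil: "lspan n [] = {0\<^sub>v n :: 'a::field Matrix.vec}"
proof -
  have "\<And>y. y \<in> carrier_vec 0 \<Longrightarrow> mat_of_cols n [] *\<^sub>v y = (0\<^sub>v n :: 'a Matrix.vec)"
    by (intro eq_vecI) (auto simp: scalar_prod_def)
  moreover have "carrier_vec 0 = {0\<^sub>v 0 :: 'a Matrix.vec}" by auto
  ultimately show ?thesis unfolding lspan_def by simp
qed

lemma lspan_Cons:
  fixes vs :: "'a::field Matrix.vec list"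
  assumes u: "u \<in> carrier_vec n"
  shows "lspan n (u # vs) = (\<lambda>(c,w). c \<cdot>\<^sub>v u + w) ` (UNIV \<times> lspan n vs)"
proof (intro equalityI subsetI)
  fix x assume "x \<in> lspan n (u # vs)"
  then obtain y where y: "y \<in> carrier_vec (Suc (length vs))" and x: "x = mat_of_cols n (u # vs) *\<^sub>v y"
    unfolding lspan_def by auto
  have "mat_of_cols n vs *\<^sub>v Matrix.vec (length vs) (\<lambda>i. y $ Suc i) \<in> lspan n vs"
    unfolding lspan_def by auto
  then show "x \<in> (\<lambda>(c,w). c \<cdot>\<^sub>v u + w) ` (UNIV \<times> lspan n vs)"
    using mult_mat_of_cols_Cons[OF y u] x by force
next
  fix x assume "x \<in> (\<lambda>(c,w). c \<cdot>\<^sub>v u + w) ` (UNIV \<times> lspan n vs)"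
  then obtain c z where z: "z \<in> carrier_vec (length vs)" and x: "x = c \<cdot>\<^sub>v u + mat_of_cols n vs *\<^sub>v z"
    unfolding lspan_def by auto
  define y where "y = Matrix.vec (Suc (length vs)) (\<lambda>i. if i = 0 then c else z $ (i - 1))"
  have y: "y \<in> carrier_vec (Suc (length vs))" unfolding y_def by simp
  have "Matrix.vec (length vs) (\<lambda>i. y $ Suc i) = z"
    using z unfolding y_def by (intro eq_vecI) auto
  then have "x = mat_of_cols n (u # vs) *\<^sub>v y"
    using mult_mat_of_cols_Cons[OF y u] x by (simp add: y_def)
  then show "x \<in> lspan n (u # vs)" unfolding lspan_def using y by auto
qed

lemma lin_subspace_image:
  fixes M :: "'a::field mat"
  assumes M: "M \<in> carrier_mat n m"
  shows "lin_subspace n ((\<lambda>y. M *\<^sub>v y) ` carrier_vec m)"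
  unfolding lin_subspace_def
proof (intro conjI ballI allI impI)
  show "(\<lambda>y. M *\<^sub>v y) ` carrier_vec m \<subseteq> carrier_vec n" using M by auto
  have "M *\<^sub>v 0\<^sub>v m = 0\<^sub>v n" using M by (intro eq_vecI) (auto simp: scalar_prod_def)
  then show "0\<^sub>v n \<in> (\<lambda>y. M *\<^sub>v y) ` carrier_vec m" by (intro image_eqI[where x="0\<^sub>v m"]) auto
next
  fix x y assume "x \<in> (\<lambda>y. M *\<^sub>v y) ` carrier_vec m" "y \<in> (\<lambda>y. M *\<^sub>v y) ` carrier_vec m"
  then obtain a b where "a \<in> carrier_vec m" "b \<in> carrier_vec m" "x = M *\<^sub>v a" "y = M *\<^sub>v b" by auto
  then show "x + y \<in> (\<lambda>y. M *\<^sub>v y) ` carrier_vec m"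
    using mult_add_distrib_mat_vec[OF M] by (intro image_eqI[where x="a + b"]) auto
next
  fix c x assume "x \<in> (\<lambda>y. M *\<^sub>v y) ` carrier_vec m"
  then obtain a where "a \<in> carrier_vec m" "x = M *\<^sub>v a" by auto
  then show "c \<cdot>\<^sub>v x \<in> (\<lambda>y. M *\<^sub>v y) ` carrier_vec m"
    using mult_mat_vec[OF M] by (intro image_eqI[where x="c \<cdot>\<^sub>v a"]) auto
qed

lemma lin_subspace_lspan: "lin_subspace n (lspan n vs)"
  unfolding lspan_def by (rule lin_subspace_image) auto

lemma lin_subspace_carrier: "lin_subspace n (carrier_vec n)"
  unfolding lin_subspace_def by auto

lemma lin_subspace_is_subspace:
  assumes "is_subspace TYPE('a::field) T W" shows "lin_subspace T W"
  using assms unfolding is_subspace_def VectorSpace.subspace_def submodule_def lin_subspace_def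
  by (auto simp: module_vec_simps)

lemma finite_lin_subspace:
  "lin_subspace n W \<Longrightarrow> finite (W :: 'a::{finite,field} Matrix.vec set)"
  unfolding lin_subspace_def using finite_subset finite_carrier_vec by blast

lemma lspan_least:
  fixes vs :: "'a::field Matrix.vec list"
  assumes W: "lin_subspace n W" shows "set vs \<subseteq> W \<Longrightarrow> lspan n vs \<subseteq> W"
proof (induction vs)
  case Nil then show ?case using W by (simp add: lspan_Nil lin_subspace_def)
next
  case (Cons u vs)
  have u: "u \<in> carrier_vec n" using Cons.prems W by (auto simp: lin_subspace_def)
  show ?case unfolding lspan_Cons[OF u] using Cons W unfolding lin_subspace_def by auto
qed

lemma set_subset_lspan:
  fixes vs :: "'a::field Matrix.vec list"
  shows "set vs \<subseteq> carrier_vec n \<Longrightarrow> set vs \<subseteq> lspan n vs"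
proof (induction vs)
  case Nil then show ?case by simp
next
  case (Cons u vs)
  have u: "u \<in> carrier_vec n" using Cons.prems by auto
  have "0\<^sub>v n \<in> lspan n vs" using lin_subspace_lspan[of n vs] by (simp add: lin_subspace_def)
  then have "u \<in> lspan n (u # vs)"
    unfolding lspan_Cons[OF u] image_iff using u by (intro bexI[where x="(1, 0\<^sub>v n)"]) simp_all
  moreover have "v \<in> lspan n (u # vs)" if v: "v \<in> set vs" for v
  proof -
    have "v \<in> lspan n vs" "v \<in> carrier_vec n" using Cons v by auto
    then show ?thesis
      unfolding lspan_Cons[OF u] image_iff using u by (intro bexI[where x="(0, v)"]) auto
  qed
  ultimately show ?case by auto
qed

text \<open>Over a finite field, a list of k vectors is linearly independent exactly when its span
  has the maximal possible size q^k.  We use this as the definition.\<close>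
definition indep :: "nat \<Rightarrow> 'a::{finite,field} Matrix.vec list \<Rightarrow> bool" where
  "indep n vs \<longleftrightarrow> card (lspan n vs) = CARD('a) ^ length vs"

lemma indep_Nil: "indep n []"
  unfolding indep_def by (simp add: lspan_Nil)

text \<open>Adding u to an independent list keeps it independent iff u is outside the span:
  then c u + w is injective in (c, w), multiplying the span size by q.\<close>
lemma indep_Cons:
  fixes vs :: "'a::{finite,field} Matrix.vec list"
  assumes u: "u \<in> carrier_vec n"
  shows "indep n (u # vs) \<longleftrightarrow> indep n vs \<and> u \<notin> lspan n vs"
proof (cases "u \<in> lspan n vs")
  case True
  have "lspan n (u # vs) \<subseteq> lspan n vs"
    unfolding lspan_Cons[OF u] using True lin_subspace_lspan[of n vs] unfolding lin_subspace_def by auto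
  then have "card (lspan n (u # vs)) \<le> card (lspan n vs)" by (intro card_mono finite_lspan)
  also have "\<dots> \<le> CARD('a) ^ length vs" by (rule card_lspan_le)
  also have "\<dots> < CARD('a) ^ length (u # vs)" using one_less_card_field[where 'a='a] by simp
  finally show ?thesis using True unfolding indep_def by simp
next
  case False
  let ?L = "lspan n vs"
  have S: "lin_subspace n ?L" by (rule lin_subspace_lspan)
  have inj: "inj_on (\<lambda>(c,w). c \<cdot>\<^sub>v u + w) (UNIV \<times> ?L)"
  proof (rule inj_onI, clarify)
    fix c w c' w' assume w: "w \<in> ?L" and w': "w' \<in> ?L" and eq: "c \<cdot>\<^sub>v u + w = c' \<cdot>\<^sub>v u + w'"
    have wc: "w \<in> carrier_vec n" "w' \<in> carrier_vec n" using w w' S by (auto simp: lin_subspace_def)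
    have comp: "c * u $ i + w $ i = c' * u $ i + w' $ i" if "i < n" for i
      using arg_cong[OF eq, of "\<lambda>x. x $ i"] that u wc by simp
    show "c = c' \<and> w = w'"
    proof (cases "c = c'")
      case True
      then show ?thesis using comp wc by (auto intro: eq_vecI)
    next
      case ne: False
      have "(1 / (c - c')) \<cdot>\<^sub>v (w' + (-1) \<cdot>\<^sub>v w) \<in> ?L"
        using S w w' unfolding lin_subspace_def by blast
      moreover have "(1 / (c - c')) \<cdot>\<^sub>v (w' + (-1) \<cdot>\<^sub>v w) = u"
      proof (rule eq_vecI)
        fix i assume "i < dim_vec u"
        then have i: "i < n" using u by simp
        have "w' $ i - w $ i = (c - c') * u $ i" using comp[OF i] by (simp add: algebra_simps)
        then show "((1 / (c - c')) \<cdot>\<^sub>v (w' + (-1) \<cdot>\<^sub>v w)) $ i = u $ i"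
          using i wc ne by (simp add: field_simps)
      qed (use u wc in simp)
      ultimately show ?thesis using False by simp
    qed
  qed
  have "card (lspan n (u # vs)) = card ((UNIV::'a set) \<times> ?L)"
    unfolding lspan_Cons[OF u] using card_image[OF inj] by simp
  then have "card (lspan n (u # vs)) = CARD('a) * card ?L" by (simp add: card_cartesian_product)
  then show ?thesis using False one_less_card_field[where 'a='a] unfolding indep_def by simp
qed

lemma lspan_eq_iff_indep:
  fixes zs :: "'a::{finite,field} Matrix.vec list"
  assumes W: "lin_subspace n W" and cW: "card W = CARD('a) ^ length zs" and zs: "set zs \<subseteq> carrier_vec n"
  shows "lspan n zs = W \<longleftrightarrow> set zs \<subseteq> W \<and> indep n zs"
proof
  assume "lspan n zs = W"
  then show "set zs \<subseteq> W \<and> indep n zs" using set_subset_lspan[OF zs] cW unfolding indep_def by auto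
next
  assume "set zs \<subseteq> W \<and> indep n zs"
  then show "lspan n zs = W"
    using lspan_least[OF W] finite_lin_subspace[OF W] cW unfolding indep_def
    by (metis card_subset_eq)
qed

section \<open>Counting independent lists\<close>

lemma indep_extensions_Suc:
  fixes ws :: "'a::{finite,field} Matrix.vec list"
  assumes Wc: "W \<subseteq> carrier_vec n"
  shows "{us. length us = Suc m \<and> set us \<subseteq> W \<and> indep n (us @ ws)}
       = (\<lambda>(us,u). u # us) ` (SIGMA us:{us. length us = m \<and> set us \<subseteq> W \<and> indep n (us @ ws)}.
                                 W - lspan n (us @ ws))"
    (is "?S (Suc m) = ?F ` (SIGMA us:?S m. ?C us)")
proof (intro equalityI subsetI)
  fix xs assume "xs \<in> ?S (Suc m)"
  then obtain u us where xs: "xs = u # us" "length us = m" "u \<in> W" "set us \<subseteq> W"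
      "indep n (u # (us @ ws))"
    by (cases xs) auto
  then have "(us, u) \<in> (SIGMA us:?S m. ?C us)" using indep_Cons[of u n "us @ ws"] Wc by auto
  then show "xs \<in> ?F ` (SIGMA us:?S m. ?C us)" using xs(1) by force
next
  fix xs assume "xs \<in> ?F ` (SIGMA us:?S m. ?C us)"
  then obtain us u where "xs = u # us" "us \<in> ?S m" "u \<in> W" "u \<notin> lspan n (us @ ws)" by auto
  then show "xs \<in> ?S (Suc m)" using indep_Cons[of u n "us @ ws"] Wc by auto
qed

text \<open>In a subspace W with q^k elements, the lists us of length m such that us @ ws is independent
  (for a fixed independent list ws in W) are counted by choosing each new entry outside the span
  of the previous ones, which has q^(length ws + i) elements.  With ws = [] this counts ordered
  bases.\<close>
lemma card_indep_extensions:
  fixes ws :: "'a::{finite,field} Matrix.vec list"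
  assumes W: "lin_subspace n W" and cW: "card W = CARD('a) ^ k"
    and ws: "set ws \<subseteq> W" "indep n ws"
  shows "card {us. length us = m \<and> set us \<subseteq> W \<and> indep n (us @ ws)}
       = (\<Prod>i<m. CARD('a) ^ k - CARD('a) ^ (length ws + i))"
proof (induction m)
  case 0
  have "{us. length us = 0 \<and> set us \<subseteq> W \<and> indep n (us @ ws)} = {[]}" using ws by auto
  then show ?case by simp
next
  case (Suc m)
  let ?q = "CARD('a)"
  define S where "S m = {us. length us = m \<and> set us \<subseteq> W \<and> indep n (us @ ws)}" for m
  have Wc: "W \<subseteq> carrier_vec n" using W by (simp add: lin_subspace_def)
  have finW: "finite W" using finite_lin_subspace[OF W] .
  have finS: "finite (S m)"
    by (rule finite_subset[of _ "{us. set us \<subseteq> W \<and> length us = m}"])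
       (auto simp: S_def intro: finite_lists_length_eq[OF finW])
  have choices: "card (W - lspan n (us @ ws)) = ?q ^ k - ?q ^ (length ws + m)" if "us \<in> S m" for us
  proof -
    have sub: "lspan n (us @ ws) \<subseteq> W" using that ws lspan_least[OF W] unfolding S_def by auto
    have "card (lspan n (us @ ws)) = ?q ^ (length ws + m)"
      using that unfolding S_def indep_def by (simp add: add.commute)
    then show ?thesis using card_Diff_subset[OF finite_lspan sub] cW by simp
  qed
  have "inj_on (\<lambda>(us,u). u # us) (SIGMA us:S m. W - lspan n (us @ ws))"
    by (auto simp: inj_on_def)
  then have "card (S (Suc m)) = card (SIGMA us:S m. W - lspan n (us @ ws))"
    unfolding S_def indep_extensions_Suc[OF Wc] by (rule card_image)
  also have "\<dots> = (\<Sum>us\<in>S m. card (W - lspan n (us @ ws)))"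
    using finS finW by (intro card_SigmaI) auto
  also have "\<dots> = card (S m) * (?q ^ k - ?q ^ (length ws + m))" using choices by simp
  finally show ?case using Suc.IH unfolding S_def by simp
qed

text \<open>Every independent list in W extends to one of length k = dim W, since the count is positive.\<close>
lemma exists_indep_extension:
  fixes ws :: "'a::{finite,field} Matrix.vec list"
  assumes W: "lin_subspace n W" and cW: "card W = CARD('a) ^ k"
    and ws: "set ws \<subseteq> W" "indep n ws" and le: "length ws + m \<le> k"
  shows "\<exists>us. length us = m \<and> set us \<subseteq> W \<and> indep n (us @ ws)"
proof -
  have "0 < (\<Prod>i<m. CARD('a) ^ k - CARD('a) ^ (length ws + i))"
    using le one_less_card_field[where 'a='a] by (intro prod_pos) (simp add: power_strict_increasing)
  then have "{us. length us = m \<and> set us \<subseteq> W \<and> indep n (us @ ws)} \<noteq> {}"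
    using card_indep_extensions[OF W cW ws, of m] by (metis card.empty less_irrefl)
  then show ?thesis by auto
qed

lemma exists_basis:
  fixes W :: "'a::{finite,field} Matrix.vec set"
  assumes W: "lin_subspace n W" and cW: "card W = CARD('a) ^ k"
  shows "\<exists>ws. length ws = k \<and> set ws \<subseteq> W \<and> indep n ws \<and> lspan n ws = W"
proof -
  obtain us where us: "length us = k" "set us \<subseteq> W" "indep n (us @ [])"
    using exists_indep_extension[OF W cW _ indep_Nil, of k] by auto
  then have "lspan n us = W"
    using lspan_eq_iff_indep[OF W _ , of us] cW W unfolding lin_subspace_def by auto
  then show ?thesis using us by auto
qed

section \<open>Dimension, rank and cardinality\<close>

text \<open>A finite-dimensional vector space over F with dimension k has q^k elements
  (coordinates with respect to a basis).\<close>
lemma card_vectorspace: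
  fixes VS :: "('a::{finite,field}, 'c, 'd) module_scheme"
  assumes vsp: "vectorspace class_ring VS" and fd: "vectorspace.fin_dim class_ring VS"
  shows "card (carrier VS) = CARD('a) ^ vectorspace.dim class_ring VS"
proof -
  interpret V: vectorspace class_ring VS by (rule vsp)
  obtain \<beta> where fb: "finite \<beta>" "V.basis \<beta>" using V.finite_basis_exists[OF fd] by blast
  have \<beta>c: "\<beta> \<subseteq> carrier VS" using fb(2) unfolding V.basis_def by simp
  have unique: "\<And>v. v \<in> carrier VS \<Longrightarrow> \<exists>!a. a \<in> \<beta> \<rightarrow>\<^sub>E UNIV \<and> V.lincomb a \<beta> = v"
    using V.basis_criterion[OF fb(1) \<beta>c] fb(2) by simp
  have closed: "V.lincomb a \<beta> \<in> carrier VS" if "a \<in> \<beta> \<rightarrow>\<^sub>E UNIV" for a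
    using that \<beta>c by (intro V.lincomb_closed) auto
  have "bij_betw (\<lambda>a. V.lincomb a \<beta>) (\<beta> \<rightarrow>\<^sub>E (UNIV::'a set)) (carrier VS)"
  proof (rule bij_betw_imageI)
    show "inj_on (\<lambda>a. V.lincomb a \<beta>) (\<beta> \<rightarrow>\<^sub>E UNIV)"
      using unique closed by (intro inj_onI) blast
    show "(\<lambda>a. V.lincomb a \<beta>) ` (\<beta> \<rightarrow>\<^sub>E UNIV) = carrier VS"
      using unique closed by blast
  qed
  then have "card (carrier VS) = CARD('a) ^ card \<beta>"
    by (simp add: bij_betw_same_card[symmetric] card_PiE fb(1))
  then show ?thesis using V.dim_basis[OF fb] by simp
qed

lemma card_subspace:
  assumes "is_subspace TYPE('a::{finite,field}) T W"
  shows "card W = CARD('a) ^ sub_dim TYPE('a) T W"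
proof -
  interpret vec_space "TYPE('a)" T .
  have sub: "VectorSpace.subspace class_ring W V" using assms by (simp add: is_subspace_def)
  have Wc: "W \<subseteq> carrier V" using sub by (simp add: VectorSpace.subspace_def submodule_def)
  have "span W \<subseteq> W" using span_is_subset[OF subset_refl] sub by (simp add: subspace_def)
  then have "span W = W" using in_own_span Wc by auto
  moreover have "finite W" using finite_subset[OF Wc] finite_carrier_vec[where 'a='a, of T] by simp
  ultimately have "vectorspace.fin_dim class_ring (vs W)" using fin_dim_span[OF _ Wc] by simp
  then show ?thesis
    using card_vectorspace[OF subspace_is_vs[OF sub]] unfolding sub_dim_def by simp
qed

lemma card_col_image:
  fixes G :: "'a::{finite,field} mat"
  assumes G: "G \<in> carrier_mat n m"
  shows "card ((\<lambda>y. G *\<^sub>v y) ` carrier_vec m) = CARD('a) ^ mrank n G"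
proof -
  interpret vec_space "TYPE('a)" n .
  have sc: "set (cols G) \<subseteq> carrier_vec n" using G by (auto simp: cols_def)
  have "card (span (set (cols G))) = CARD('a) ^ rank G"
    using card_vectorspace[OF subspace_is_vs[OF span_is_subspace[OF sc]] fin_dim_span_cols[OF G]]
    unfolding rank_def by simp
  moreover have "col_space G = (\<lambda>y. G *\<^sub>v y) ` carrier_vec m"
    using col_space_eq[OF G] G by auto
  ultimately show ?thesis unfolding col_space_def mrank_def by simp
qed

lemma mrank_le:
  fixes G :: "'a::{finite,field} mat"
  assumes G: "G \<in> carrier_mat h h"
  shows "mrank h G \<le> h"
proof -
  have "(\<lambda>y. G *\<^sub>v y) ` carrier_vec h \<subseteq> carrier_vec h" using G by auto
  then have "CARD('a) ^ mrank h G \<le> CARD('a) ^ h"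
    using card_col_image[OF G] card_mono[OF finite_carrier_vec] card_carrier_vec by metis
  then show ?thesis using one_less_card_field[where 'a='a] by simp
qed

lemma mult_unit_vec_col:
  fixes M :: "'a::field mat"
  assumes M: "M \<in> carrier_mat k n" and j: "j < n"
  shows "M *\<^sub>v unit_vec n j = col M j"
  using M j by (intro eq_vecI) (auto simp: scalar_prod_right_unit)

lemma mat_eq_on_carrier:
  fixes M M' :: "'a::field mat"
  assumes M: "M \<in> carrier_mat k n" and M': "M' \<in> carrier_mat k n"
    and e: "\<And>y. y \<in> carrier_vec n \<Longrightarrow> M *\<^sub>v y = M' *\<^sub>v y"
  shows "M = M'"
proof (rule eq_matI)
  fix i j assume i: "i < dim_row M'" and j: "j < dim_col M'"
  have "col M j = col M' j"
    using mult_unit_vec_col[OF M, of j] mult_unit_vec_col[OF M', of j] e[of "unit_vec n j"] j M' by simp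
  then have "col M j $ i = col M' j $ i" by simp
  then show "M $$ (i, j) = M' $$ (i, j)" using i j M M' by simp
qed (use M M' in auto)

text \<open>Rank factorisation: G = B R with B an m \<times> r matrix whose columns form a basis of the
  column space of G (r = rank G), and R the r \<times> n matrix of coordinates of the columns of G.\<close>
lemma rank_factorization:
  fixes G :: "'a::{finite,field} mat"
  assumes G: "G \<in> carrier_mat m n"
  obtains B R where "B \<in> carrier_mat m (mrank m G)" "R \<in> carrier_mat (mrank m G) n" "G = B * R"
proof -
  let ?C = "(\<lambda>y. G *\<^sub>v y) ` carrier_vec n"
  let ?r = "mrank m G"
  obtain bs where bs: "length bs = ?r" "lspan m bs = ?C"
    using exists_basis[OF lin_subspace_image[OF G] card_col_image[OF G]] by blast
  define B where "B = mat_of_cols m bs"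
  have B: "B \<in> carrier_mat m ?r" unfolding B_def bs(1)[symmetric] by simp
  have "\<exists>r. r \<in> carrier_vec ?r \<and> B *\<^sub>v r = col G j" if j: "j < n" for j
  proof -
    have "col G j \<in> ?C" using mult_unit_vec_col[OF G j] by (intro image_eqI[where x="unit_vec n j"]) auto
    then have "col G j \<in> (\<lambda>y. B *\<^sub>v y) ` carrier_vec ?r" using bs unfolding lspan_def B_def by simp
    then obtain r where "r \<in> carrier_vec ?r" "col G j = B *\<^sub>v r" by (rule imageE)
    then show ?thesis by auto
  qed
  then obtain r where r: "\<And>j. j < n \<Longrightarrow> r j \<in> carrier_vec ?r \<and> B *\<^sub>v r j = col G j"
    by (metis (no_types))
  define R where "R = Matrix.mat ?r n (\<lambda>(i,j). r j $ i)"
  have R: "R \<in> carrier_mat ?r n" unfolding R_def by simp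
  have colR: "col R j = r j" if "j < n" for j
    using r[OF that] that unfolding R_def by (intro eq_vecI) auto
  have "G = B * R"
  proof (rule eq_matI)
    fix i j assume "i < dim_row (B * R)" "j < dim_col (B * R)"
    then have j: "j < n" and i: "i < m" using B R by auto
    have "(B * R) $$ (i, j) = (B *\<^sub>v r j) $ i" using i j B R colR[OF j] by simp
    then show "G $$ (i, j) = (B * R) $$ (i, j)" using r[OF j] G i j by simp
  qed (use G B R in auto)
  with B R that show ?thesis by blast
qed

text \<open>Row rank is at most column rank, in terms of cardinalities: by the rank factorisation,
  G^T = R^T B^T, so the image of G^T lies in that of R^T, which has at most q^(rank G) elements.\<close>
lemma card_image_transpose_le:
  fixes G :: "'a::{finite,field} mat"
  assumes G: "G \<in> carrier_mat m n"
  shows "card ((\<lambda>y. G\<^sup>T *\<^sub>v y) ` carrier_vec m) \<le> card ((\<lambda>y. G *\<^sub>v y) ` carrier_vec n)"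
proof -
  let ?r = "mrank m G"
  obtain B R where B: "B \<in> carrier_mat m ?r" and R: "R \<in> carrier_mat ?r n" and GBR: "G = B * R"
    using rank_factorization[OF G] .
  have GT: "G\<^sup>T = R\<^sup>T * B\<^sup>T" using transpose_mult[OF B R] GBR by simp
  have "(\<lambda>y. G\<^sup>T *\<^sub>v y) ` carrier_vec m \<subseteq> (\<lambda>z. R\<^sup>T *\<^sub>v z) ` carrier_vec ?r"
  proof
    fix x assume "x \<in> (\<lambda>y. G\<^sup>T *\<^sub>v y) ` carrier_vec m"
    then obtain y where y: "y \<in> carrier_vec m" "x = G\<^sup>T *\<^sub>v y" by auto
    then have "x = R\<^sup>T *\<^sub>v (B\<^sup>T *\<^sub>v y)" using GT assoc_mult_mat_vec[of "R\<^sup>T" n ?r "B\<^sup>T" m] B R by simp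
    then show "x \<in> (\<lambda>z. R\<^sup>T *\<^sub>v z) ` carrier_vec ?r" using B y by auto
  qed
  then have "card ((\<lambda>y. G\<^sup>T *\<^sub>v y) ` carrier_vec m) \<le> card ((\<lambda>z. R\<^sup>T *\<^sub>v z) ` carrier_vec ?r)"
    by (intro card_mono finite_imageI finite_carrier_vec)
  also have "\<dots> \<le> card (carrier_vec ?r :: 'a Matrix.vec set)" by (intro card_image_le finite_carrier_vec)
  also have "\<dots> = card ((\<lambda>y. G *\<^sub>v y) ` carrier_vec n)" using card_col_image[OF G] card_carrier_vec by metis
  finally show ?thesis .
qed

text \<open>Applying card_image_transpose_le to G and to G^T: the row space of G, i.e. the image of G^T,
  has q^(rank G) elements.\<close>
lemma card_row_image:
  fixes G :: "'a::{finite,field} mat"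
  assumes G: "G \<in> carrier_mat m n"
  shows "card ((\<lambda>y. G\<^sup>T *\<^sub>v y) ` carrier_vec m) = CARD('a) ^ mrank m G"
  using card_image_transpose_le[OF G] card_image_transpose_le[of "G\<^sup>T" n m] G card_col_image[OF G]
  by simp

section \<open>Row spaces and coordinates of matrices\<close>

lemma rowsp_eq_image:
  fixes X :: "'a::field mat"
  assumes X: "X \<in> carrier_mat h T"
  shows "rowsp T X = (\<lambda>y. X\<^sup>T *\<^sub>v y) ` carrier_vec h"
proof -
  interpret vec_space "TYPE('a)" T .
  show ?thesis unfolding rowsp_def using row_space_eq[OF X] X by auto
qed

lemma rowsp_mult:
  fixes X G :: "'a::field mat"
  assumes G: "G \<in> carrier_mat h h" and X: "X \<in> carrier_mat h T"
  shows "rowsp T (G * X) = (\<lambda>y. X\<^sup>T *\<^sub>v y) ` ((\<lambda>y. G\<^sup>T *\<^sub>v y) ` carrier_vec h)"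
proof -
  have "rowsp T (G * X) = (\<lambda>y. (X\<^sup>T * G\<^sup>T) *\<^sub>v y) ` carrier_vec h"
    unfolding rowsp_eq_image[OF mult_carrier_mat[OF G X]] transpose_mult[OF G X] ..
  also have "\<dots> = (\<lambda>y. X\<^sup>T *\<^sub>v (G\<^sup>T *\<^sub>v y)) ` carrier_vec h"
    using G X by (intro image_cong) (auto simp: assoc_mult_mat_vec)
  finally show ?thesis by (simp add: image_image)
qed

lemma mat_of_cols_map_mult:
  fixes M :: "'a::field mat"
  assumes M: "M \<in> carrier_mat k n" and vs: "set vs \<subseteq> carrier_vec n"
  shows "mat_of_cols k (map (\<lambda>v. M *\<^sub>v v) vs) = M * mat_of_cols n vs"
proof (rule eq_matI)
  fix i j assume i: "i < dim_row (M * mat_of_cols n vs)" and j: "j < dim_col (M * mat_of_cols n vs)"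
  have "vs ! j \<in> carrier_vec n" using vs j by auto
  then have "(M * mat_of_cols n vs) $$ (i, j) = Matrix.row M i \<bullet> vs ! j"
    using i j by (simp add: col_mat_of_cols)
  also have "\<dots> = mat_of_cols k (map (\<lambda>v. M *\<^sub>v v) vs) $$ (i, j)"
    using i j M by (simp add: mat_of_cols_index)
  finally show "mat_of_cols k (map (\<lambda>v. M *\<^sub>v v) vs) $$ (i, j) = (M * mat_of_cols n vs) $$ (i, j)" ..
qed (use M in auto)

lemma lspan_map:
  fixes M :: "'a::field mat"
  assumes M: "M \<in> carrier_mat k n" and vs: "set vs \<subseteq> carrier_vec n"
  shows "lspan k (map (\<lambda>v. M *\<^sub>v v) vs) = (\<lambda>v. M *\<^sub>v v) ` lspan n vs"
proof -
  have "lspan k (map (\<lambda>v. M *\<^sub>v v) vs) = (\<lambda>y. (M * mat_of_cols n vs) *\<^sub>v y) ` carrier_vec (length vs)"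
    unfolding lspan_def mat_of_cols_map_mult[OF M vs] by simp
  also have "\<dots> = (\<lambda>y. M *\<^sub>v (mat_of_cols n vs *\<^sub>v y)) ` carrier_vec (length vs)"
    using assoc_mult_mat_vec[OF M mat_of_cols_carrier(1)] by (intro image_cong) auto
  also have "\<dots> = (\<lambda>v. M *\<^sub>v v) ` lspan n vs" unfolding lspan_def by (simp add: image_image)
  finally show ?thesis .
qed

text \<open>Fix a basis cs of F^h.  The coordinate map X \<mapsto> [X^T c. c \<leftarrow> cs] identifies the h \<times> T
  matrices with the h-tuples of vectors of F^T.\<close>
definition coords :: "'a::field Matrix.vec list \<Rightarrow> 'a mat \<Rightarrow> 'a Matrix.vec list" where
  "coords cs X = map (\<lambda>c. X\<^sup>T *\<^sub>v c) cs"

text \<open>Under the coordinate map the span of the coordinates of X is the image of span cs under X^T;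
  and, for a basis cs, the map is a bijection (injective since X^T is determined by its values on
  a basis, surjective by counting).\<close>
lemma lspan_coords:
  fixes X :: "'a::field mat"
  assumes X: "X \<in> carrier_mat h T" and cs: "set cs \<subseteq> carrier_vec h"
  shows "lspan T (coords cs X) = (\<lambda>v. X\<^sup>T *\<^sub>v v) ` lspan h cs"
  unfolding coords_def using X cs by (intro lspan_map) auto

lemma bij_coords:
  fixes cs :: "'a::{finite,field} Matrix.vec list"
  assumes cs: "set cs \<subseteq> carrier_vec h" "length cs = h" "lspan h cs = carrier_vec h"
  shows "bij_betw (coords cs) (carrier_mat h T) {zs. set zs \<subseteq> carrier_vec T \<and> length zs = h}"
proof -
  let ?L = "{zs. set zs \<subseteq> (carrier_vec T :: 'a Matrix.vec set) \<and> length zs = h}"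
  have inj: "inj_on (coords cs) (carrier_mat h T)"
  proof (rule inj_onI)
    fix X X' assume X: "X \<in> carrier_mat h T" and X': "X' \<in> carrier_mat h T" and e: "coords cs X = coords cs X'"
    have "X\<^sup>T *\<^sub>v y = X'\<^sup>T *\<^sub>v y" if y: "y \<in> carrier_vec h" for y
    proof -
      have "y \<in> (\<lambda>z. mat_of_cols h cs *\<^sub>v z) ` carrier_vec h" using y cs unfolding lspan_def by simp
      then obtain z where "z \<in> carrier_vec h" "y = mat_of_cols h cs *\<^sub>v z" by auto
      moreover have "X\<^sup>T * mat_of_cols h cs = X'\<^sup>T * mat_of_cols h cs"
        using e mat_of_cols_map_mult[of "X\<^sup>T" T h cs] mat_of_cols_map_mult[of "X'\<^sup>T" T h cs] X X' cs
        unfolding coords_def by (metis transpose_carrier_mat)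
      ultimately show ?thesis using X X' cs
        by (metis assoc_mult_mat_vec mat_of_cols_carrier(1) transpose_carrier_mat)
    qed
    then have "X\<^sup>T = X'\<^sup>T" using X X' by (intro mat_eq_on_carrier[of _ T h]) auto
    then show "X = X'" using arg_cong[of "X\<^sup>T" "X'\<^sup>T" transpose_mat] by simp
  qed
  have sub: "coords cs ` carrier_mat h T \<subseteq> ?L"
    using cs unfolding coords_def by (auto intro!: mult_mat_vec_carrier)
  have "card (coords cs ` carrier_mat h T) = card ?L"
    using card_image[OF inj] cs
    by (simp add: card_carrier_mat card_lists_length_eq finite_carrier_vec card_carrier_vec
        power_mult mult.commute)
  then have "coords cs ` carrier_mat h T = ?L"
    using sub by (intro card_subset_eq) (auto intro: finite_lists_length_eq finite_carrier_vec)
  then show ?thesis using inj unfolding bij_betw_def by simp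
qed

section \<open>Counting ordered bases adapted to a pair of subspaces\<close>

lemma adapted_basis_iff:
  fixes U V :: "'a::{finite,field} Matrix.vec set"
  assumes U: "lin_subspace T U" "card U = CARD('a) ^ h"
    and V: "lin_subspace T V" "V \<subseteq> U" "card V = CARD('a) ^ d" and dh: "d \<le> h"
  shows "(set zs \<subseteq> carrier_vec T \<and> length zs = h \<and> lspan T zs = U \<and> lspan T (drop (h - d) zs) = V)
     \<longleftrightarrow> (\<exists>b a. zs = a @ b \<and> length b = d \<and> set b \<subseteq> V \<and> indep T b
                 \<and> length a = h - d \<and> set a \<subseteq> U \<and> indep T (a @ b))"
proof
  assume "set zs \<subseteq> carrier_vec T \<and> length zs = h \<and> lspan T zs = U \<and> lspan T (drop (h - d) zs) = V"
  then have zs: "set zs \<subseteq> carrier_vec T" "length zs = h" "lspan T zs = U" "lspan T (drop (h - d) zs) = V"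
    by auto
  have bc: "set (drop (h - d) zs) \<subseteq> carrier_vec T" using order.trans[OF set_drop_subset zs(1)] .
  have "set (drop (h - d) zs) \<subseteq> V \<and> indep T (drop (h - d) zs)"
    using lspan_eq_iff_indep[OF V(1) _ bc] V(3) zs(2,4) dh by simp
  moreover have "set zs \<subseteq> U \<and> indep T zs"
    using lspan_eq_iff_indep[OF U(1) _ zs(1)] U(2) zs(2,3) by simp
  ultimately show "\<exists>b a. zs = a @ b \<and> length b = d \<and> set b \<subseteq> V \<and> indep T b
                 \<and> length a = h - d \<and> set a \<subseteq> U \<and> indep T (a @ b)"
    using zs(2) dh set_take_subset[of "h - d" zs]
    by (intro exI[of _ "drop (h - d) zs"] exI[of _ "take (h - d) zs"]) auto
next
  assume "\<exists>b a. zs = a @ b \<and> length b = d \<and> set b \<subseteq> V \<and> indep T b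
                 \<and> length a = h - d \<and> set a \<subseteq> U \<and> indep T (a @ b)"
  then obtain a b where zs: "zs = a @ b" and ab: "length b = d" "set b \<subseteq> V" "indep T b"
      "length a = h - d" "set a \<subseteq> U" "indep T (a @ b)"
    by blast
  have len: "length zs = h" and sU: "set zs \<subseteq> U" and dr: "drop (h - d) zs = b"
    using zs ab V(2) dh by auto
  have zc: "set zs \<subseteq> carrier_vec T" and bc: "set b \<subseteq> carrier_vec T"
    using sU ab(2) U(1) V(1) by (auto simp: lin_subspace_def)
  have "lspan T zs = U" using lspan_eq_iff_indep[OF U(1) _ zc] U(2) len sU ab(6) zs by simp
  moreover have "lspan T b = V" using lspan_eq_iff_indep[OF V(1) _ bc] V(3) ab(1-3) by simp
  ultimately show "set zs \<subseteq> carrier_vec T \<and> length zs = h \<and> lspan T zs = U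
                     \<and> lspan T (drop (h - d) zs) = V"
    using zc len dr by simp
qed

text \<open>Consequently such tuples are counted by choosing the ordered basis b of V and then its
  completion; both choices are counted by card_indep_extensions.\<close>
lemma card_adapted_bases:
  fixes U V :: "'a::{finite,field} Matrix.vec set"
  assumes U: "lin_subspace T U" "card U = CARD('a) ^ h"
    and V: "lin_subspace T V" "V \<subseteq> U" "card V = CARD('a) ^ d" and dh: "d \<le> h"
  shows "card {zs. set zs \<subseteq> carrier_vec T \<and> length zs = h \<and> lspan T zs = U
                   \<and> lspan T (drop (h - d) zs) = V}
       = (\<Prod>i<d. CARD('a) ^ d - CARD('a) ^ i) * (\<Prod>i<h - d. CARD('a) ^ h - CARD('a) ^ (d + i))"
proof -
  let ?q = "CARD('a)"
  define A where "A = {b. length b = d \<and> set b \<subseteq> V \<and> indep T b}"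
  define E where "E b = {a. length a = h - d \<and> set a \<subseteq> U \<and> indep T (a @ b)}" for b
  have "{zs. set zs \<subseteq> carrier_vec T \<and> length zs = h \<and> lspan T zs = U \<and> lspan T (drop (h - d) zs) = V}
      = (\<lambda>(b,a). a @ b) ` (SIGMA b:A. E b)"
    using adapted_basis_iff[OF U V dh] unfolding A_def E_def by auto
  moreover have "inj_on (\<lambda>(b,a). a @ b) (SIGMA b:A. E b)"
    by (auto simp: inj_on_def E_def)
  moreover have "finite A" "\<And>b. finite (E b)"
    using finite_lin_subspace[OF U(1)] finite_lin_subspace[OF V(1)] unfolding A_def E_def
    by (auto intro: finite_subset[OF _ finite_lists_length_eq])
  moreover have "card (E b) = (\<Prod>i<h - d. ?q ^ h - ?q ^ (d + i))" if "b \<in> A" for b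
    using that card_indep_extensions[OF U, of b "h - d"] V(2) unfolding A_def E_def by auto
  moreover have "card A = (\<Prod>i<d. ?q ^ d - ?q ^ i)"
    using card_indep_extensions[OF V(1,3) _ indep_Nil, of d] unfolding A_def by simp
  ultimately show ?thesis by (simp add: card_image card_SigmaI)
qed

text \<open>The central count: for G of rank d, the h \<times> T matrices X with row space U and with
  rowsp (G X) = V correspond, via the coordinates with respect to a basis of F^h ending in a
  basis of the row space of G, to the adapted ordered bases of card_adapted_bases.\<close>
lemma card_bases_mult:
  fixes G :: "'a::{finite,field} mat"
  assumes G: "G \<in> carrier_mat h h" and rk: "mrank h G = d"
    and U: "lin_subspace T U" "card U = CARD('a) ^ h"
    and V: "lin_subspace T V" "V \<subseteq> U" "card V = CARD('a) ^ d"
  shows "card {X \<in> carrier_mat h T. rowsp T X = U \<and> rowsp T (G * X) = V}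
       = (\<Prod>i<d. CARD('a) ^ d - CARD('a) ^ i) * (\<Prod>i<h - d. CARD('a) ^ h - CARD('a) ^ (d + i))"
proof -
  define S where "S = (\<lambda>y. G\<^sup>T *\<^sub>v y) ` carrier_vec h"
  have dh: "d \<le> h" using mrank_le[OF G] rk by simp
  have cS: "card S = CARD('a) ^ d" using card_row_image[OF G] rk unfolding S_def by simp
  have sS: "lin_subspace h S" unfolding S_def using G by (intro lin_subspace_image) simp
  obtain ws where ws: "length ws = d" "set ws \<subseteq> S" "indep h ws" "lspan h ws = S"
    using exists_basis[OF sS cS] by blast
  have wsc: "set ws \<subseteq> carrier_vec h" using ws(2) sS by (auto simp: lin_subspace_def)
  obtain us where us: "length us = h - d" "set us \<subseteq> carrier_vec h" "indep h (us @ ws)"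
    using exists_indep_extension[OF lin_subspace_carrier card_carrier_vec wsc ws(3), of "h - d"] ws(1) dh
    by auto
  define cs where "cs = us @ ws"
  have csc: "set cs \<subseteq> carrier_vec h" and lcs: "length cs = h"
    using us wsc ws(1) dh unfolding cs_def by auto
  have lspan_cs: "lspan h cs = carrier_vec h"
    using lspan_eq_iff_indep[OF lin_subspace_carrier _ csc] lcs card_carrier_vec[where 'a='a] us(3) csc
    unfolding cs_def by simp
  have rowsp_X: "rowsp T X = lspan T (coords cs X)" if X: "X \<in> carrier_mat h T" for X
    unfolding lspan_coords[OF X csc] lspan_cs rowsp_eq_image[OF X] ..
  have rowsp_GX: "rowsp T (G * X) = lspan T (drop (h - d) (coords cs X))" if X: "X \<in> carrier_mat h T" for X
  proof -
    have "drop (h - d) (coords cs X) = coords ws X"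
      unfolding coords_def cs_def using us(1) by (simp add: drop_map)
    then show ?thesis unfolding rowsp_mult[OF G X] using lspan_coords[OF X wsc] ws(4) S_def by simp
  qed
  define P where "P zs \<longleftrightarrow> lspan T zs = U \<and> lspan T (drop (h - d) zs) = V" for zs
  have bij: "bij_betw (coords cs) (carrier_mat h T) {zs. set zs \<subseteq> carrier_vec T \<and> length zs = h}"
    by (rule bij_coords[OF csc lcs lspan_cs])
  have "{X \<in> carrier_mat h T. rowsp T X = U \<and> rowsp T (G * X) = V} = {X \<in> carrier_mat h T. P (coords cs X)}"
    using rowsp_X rowsp_GX unfolding P_def by auto
  also have "card \<dots> = card {zs. set zs \<subseteq> carrier_vec T \<and> length zs = h \<and> P zs}"
    using bij_betw_subset[OF bij, of "{X \<in> carrier_mat h T. P (coords cs X)}"] bij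
    by (intro bij_betw_same_card[of "coords cs"]) (auto simp: bij_betw_def)
  finally show ?thesis using card_adapted_bases[OF U V dh] unfolding P_def by (simp add: conj_assoc)
qed

text \<open>Conversely, any X with row space U maps the row space of G isomorphically onto
  rowsp (G X), so rowsp (G X) is a subspace of U with q^(rank G) elements.\<close>
lemma rowsp_mult_sub_card:
  fixes G X :: "'a::{finite,field} mat"
  assumes G: "G \<in> carrier_mat h h" and X: "X \<in> carrier_mat h T"
    and cX: "card (rowsp T X) = CARD('a) ^ h"
  shows "rowsp T (G * X) \<subseteq> rowsp T X" and "card (rowsp T (G * X)) = CARD('a) ^ mrank h G"
proof -
  let ?S = "(\<lambda>y. G\<^sup>T *\<^sub>v y) ` carrier_vec h"
  have Sc: "?S \<subseteq> carrier_vec h" using G by auto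
  show "rowsp T (G * X) \<subseteq> rowsp T X"
    unfolding rowsp_mult[OF G X] rowsp_eq_image[OF X] using Sc by auto
  have "card ((\<lambda>y. X\<^sup>T *\<^sub>v y) ` carrier_vec h) = card (carrier_vec h :: 'a Matrix.vec set)"
    using cX rowsp_eq_image[OF X] card_carrier_vec by metis
  then have "inj_on (\<lambda>y. X\<^sup>T *\<^sub>v y) (carrier_vec h)"
    by (intro eq_card_imp_inj_on finite_carrier_vec)
  then have "card (rowsp T (G * X)) = card ?S"
    unfolding rowsp_mult[OF G X] by (intro card_image inj_on_subset[OF _ Sc])
  then show "card (rowsp T (G * X)) = CARD('a) ^ mrank h G" using card_row_image[OF G] by simp
qed

lemma bases_mult_empty:
  fixes G :: "'a::{finite,field} mat"
  assumes G: "G \<in> carrier_mat h h" and cU: "card U = CARD('a) ^ h" and cV: "card V = CARD('a) ^ d"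
    and not: "\<not> (V \<subseteq> U \<and> mrank h G = d)"
  shows "{X \<in> carrier_mat h T. rowsp T X = U \<and> rowsp T (G * X) = V} = {}"
proof -
  have "V \<subseteq> U \<and> mrank h G = d"
    if X: "X \<in> carrier_mat h T" "rowsp T X = U" "rowsp T (G * X) = V" for X
  proof -
    have "V \<subseteq> U" "CARD('a) ^ mrank h G = CARD('a) ^ d"
      using rowsp_mult_sub_card[OF G X(1)] X cU cV by auto
    then show ?thesis using power_inject_exp[OF one_less_card_field] by blast
  qed
  then show ?thesis using not by blast
qed

text \<open>Taking G = 1 and V = U: the number of ordered bases of an h-dimensional U.\<close>
lemma card_ordered_bases:
  fixes U :: "'a::{finite,field} Matrix.vec set"
  assumes U: "lin_subspace T U" "card U = CARD('a) ^ h"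
  shows "card {X \<in> carrier_mat h T. rowsp T X = U} = (\<Prod>i<h. CARD('a) ^ h - CARD('a) ^ i)"
proof -
  have one: "(1\<^sub>m h :: 'a mat) \<in> carrier_mat h h" by simp
  have "(\<lambda>y. 1\<^sub>m h *\<^sub>v y) ` carrier_vec h = (carrier_vec h :: 'a Matrix.vec set)"
    by (auto intro: image_eqI)
  then have "CARD('a) ^ mrank h (1\<^sub>m h :: 'a mat) = CARD('a) ^ h"
    using card_col_image[OF one] card_carrier_vec by metis
  then have "mrank h (1\<^sub>m h :: 'a mat) = h" using one_less_card_field[where 'a='a] by simp
  moreover have "{X \<in> carrier_mat h T. rowsp T X = U \<and> rowsp T (1\<^sub>m h * X) = U}
      = {X \<in> carrier_mat h T. rowsp T X = U}"
    by auto
  ultimately show ?thesis using card_bases_mult[OF one _ U U(1) subset_refl U(2)] by simp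
qed

lemma prod_lessThan_add:
  fixes f :: "nat \<Rightarrow> 'b::comm_monoid_mult"
  shows "(\<Prod>i<d + m. f i) = (\<Prod>i<d. f i) * (\<Prod>i<m. f (d + i))"
  by (induction m) (simp_all add: ac_simps)

text \<open>The ratio of the two counts is the reciprocal of the Gaussian coefficient: the factors
  q^h - q^(d+i) cancel and (q^d - q^i) / (q^h - q^i) = (q^(d-i) - 1) / (q^(h-i) - 1).\<close>
lemma ratio_gauss_binom:
  fixes q :: nat assumes q: "1 < q" and dh: "d \<le> h"
  shows "real ((\<Prod>i<d. q ^ d - q ^ i) * (\<Prod>i<h - d. q ^ h - q ^ (d + i))) / real (\<Prod>i<h. q ^ h - q ^ i)
       = 1 / gauss_binom q h d"
proof -
  have diff: "real (q ^ k - q ^ i) = real q ^ i * (real q ^ (k - i) - 1)" if "i \<le> k" for i k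
  proof -
    have "q ^ i \<le> q ^ k" using that q by (simp add: power_increasing)
    then have "real (q ^ k - q ^ i) = real q ^ k - real q ^ i" by (simp add: of_nat_diff)
    also have "real q ^ k = real q ^ i * real q ^ (k - i)" using that by (simp flip: power_add)
    finally show ?thesis by (simp add: right_diff_distrib)
  qed
  have pos: "0 < real q ^ i" "1 < real q ^ (k - i)" if "i < k" for i k
    using q that by (simp_all add: one_less_power)
  define Q where "Q = (\<Prod>i<h - d. q ^ h - q ^ (d + i))"
  have "Q > 0" unfolding Q_def using q by (intro prod_pos) (simp add: power_strict_increasing)
  moreover have "(\<Prod>i<h. q ^ h - q ^ i) = (\<Prod>i<d. q ^ h - q ^ i) * Q"
    using prod_lessThan_add[of "\<lambda>i. q ^ h - q ^ i" d "h - d"] dh unfolding Q_def by simp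
  ultimately have "real ((\<Prod>i<d. q ^ d - q ^ i) * Q) / real (\<Prod>i<h. q ^ h - q ^ i)
      = (\<Prod>i<d. real (q ^ d - q ^ i)) / (\<Prod>i<d. real (q ^ h - q ^ i))"
    by (simp only: of_nat_mult of_nat_prod) (simp add: field_simps)
  also have "\<dots> = (\<Prod>i<d. real (q ^ d - q ^ i) / real (q ^ h - q ^ i))"
    by (rule prod_dividef[symmetric])
  also have "\<dots> = (\<Prod>i<d. (real q ^ (d - i) - 1) / (real q ^ (h - i) - 1))"
    using dh diff pos by (intro prod.cong) auto
  also have "\<dots> = 1 / gauss_binom q h d"
    unfolding gauss_binom_def prod_dividef by simp
  finally show ?thesis unfolding Q_def .
qed

section \<open>The transition probability\<close>

lemma prob_rowsp_mult:
  fixes G :: "'a::{finite,field} mat"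
  assumes G: "G \<in> carrier_mat h h"
    and U: "lin_subspace T U" "card U = CARD('a) ^ h"
    and V: "lin_subspace T V" "card V = CARD('a) ^ d" and dh: "d \<le> h"
  shows "measure_pmf.prob (pmf_of_set {X \<in> carrier_mat h T. rowsp T X = U} \<bind> (\<lambda>X. return_pmf (G * X)))
           {Y. rowsp T Y = V}
       = (if V \<subseteq> U \<and> mrank h G = d then 1 / gauss_binom CARD('a) h d else 0)"
proof -
  let ?q = "CARD('a)"
  define B where "B = {X \<in> carrier_mat h T. rowsp T X = U}"
  have cB: "card B = (\<Prod>i<h. ?q ^ h - ?q ^ i)" unfolding B_def by (rule card_ordered_bases[OF U])
  then have "card B > 0"
    using one_less_card_field[where 'a='a] by (auto intro!: prod_pos simp: power_strict_increasing)
  then have B: "finite B" "B \<noteq> {}" using card_gt_0_iff by blast+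
  have "measure_pmf.prob (pmf_of_set B \<bind> (\<lambda>X. return_pmf (G * X))) {Y. rowsp T Y = V}
      = measure_pmf.prob (pmf_of_set B) {X. rowsp T (G * X) = V}"
    by (simp add: map_pmf_def[symmetric] vimage_def)
  also have "\<dots> = real (card {X \<in> carrier_mat h T. rowsp T X = U \<and> rowsp T (G * X) = V}) / real (card B)"
    using measure_pmf_of_set[OF B(2,1), of "{X. rowsp T (G * X) = V}"] unfolding B_def
    by (simp add: Int_def conj_assoc)
  also have "\<dots> = (if V \<subseteq> U \<and> mrank h G = d then 1 / gauss_binom ?q h d else 0)"
  proof (cases "V \<subseteq> U \<and> mrank h G = d")
    case True
    then show ?thesis
      using card_bases_mult[OF G _ U V(1) _ V(2)] ratio_gauss_binom[OF one_less_card_field dh] cB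
      by simp
  next
    case False
    have "card {X \<in> carrier_mat h T. rowsp T X = U \<and> rowsp T (G * X) = V} = 0"
      unfolding bases_mult_empty[OF G U(2) V(2) False] by (rule card.empty)
    then show ?thesis unfolding if_not_P[OF False] by simp
  qed
  finally show ?thesis unfolding B_def .
qed

lemma prob_bind_pmf:
  "measure_pmf.prob (bind_pmf M N) A = measure_pmf.expectation M (\<lambda>x. measure_pmf.prob (N x) A)"
proof -
  have int: "integrable (measure_pmf M) (\<lambda>x. measure_pmf.prob (N x) A)"
    by (rule measure_pmf.integrable_const_bound[where B=1]) auto
  have "ennreal (measure_pmf.prob (bind_pmf M N) A) = (\<integral>\<^sup>+x. ennreal (measure_pmf.prob (N x) A) \<partial>M)"
    using emeasure_bind_pmf[of M N A] by (simp add: measure_pmf.emeasure_eq_measure)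
  also have "\<dots> = ennreal (measure_pmf.expectation M (\<lambda>x. measure_pmf.prob (N x) A))"
    by (rule nn_integral_eq_integral[OF int]) auto
  finally show ?thesis by (simp add: ennreal_inj integral_nonneg_AE)
qed

theorem theorem3:
  fixes Gd :: "'a::{finite,field} mat pmf"
    and h T :: nat
    and U V :: "'a Matrix.vec set"
  assumes "1 \<le> h" and "h \<le> T"
    and "set_pmf Gd \<subseteq> carrier_mat h h"
    and "is_subspace TYPE('a) T U" and "sub_dim TYPE('a) T U = h"
    and "is_subspace TYPE('a) T V" and "sub_dim TYPE('a) T V \<le> h"
  shows "measure_pmf.prob
           (do { G \<leftarrow> Gd;
                 X \<leftarrow> pmf_of_set {X \<in> carrier_mat h T. rowsp T X = U};
                 return_pmf (G * X) })
           {Y. rowsp T Y = V}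
         = (if V \<subseteq> U
            then measure_pmf.prob Gd {G. h - mrank h G = h - sub_dim TYPE('a) T V}
                 / gauss_binom CARD('a) h (sub_dim TYPE('a) T V)
            else 0)"
proof -
  define d where "d = sub_dim TYPE('a) T V"
  define R where "R = {G :: 'a mat. h - mrank h G = h - d}"
  have U: "lin_subspace T U" "card U = CARD('a) ^ h"
    using assms(4,5) lin_subspace_is_subspace card_subspace by auto
  have V: "lin_subspace T V" "card V = CARD('a) ^ d"
    using assms(6) lin_subspace_is_subspace card_subspace unfolding d_def by auto
  have dh: "d \<le> h" using assms(7) unfolding d_def .
  have cond: "measure_pmf.prob (pmf_of_set {X \<in> carrier_mat h T. rowsp T X = U} \<bind> (\<lambda>X. return_pmf (G * X)))
                {Y. rowsp T Y = V}
            = (if V \<subseteq> U then indicator R G / gauss_binom CARD('a) h d else 0)"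
    if "G \<in> set_pmf Gd" for G
  proof -
    have G: "G \<in> carrier_mat h h" using that assms(3) by auto
    then have "G \<in> R \<longleftrightarrow> mrank h G = d" using mrank_le[OF G] dh unfolding R_def by auto
    then show ?thesis using prob_rowsp_mult[OF G U V dh] by (simp add: indicator_def)
  qed
  have "measure_pmf.prob (Gd \<bind> (\<lambda>G. pmf_of_set {X \<in> carrier_mat h T. rowsp T X = U}
                                       \<bind> (\<lambda>X. return_pmf (G * X)))) {Y. rowsp T Y = V}
      = measure_pmf.expectation Gd (\<lambda>G. if V \<subseteq> U then indicator R G / gauss_binom CARD('a) h d else 0)"
    unfolding prob_bind_pmf[of Gd] by (rule integral_cong_AE) (simp_all add: AE_pmfI cond)
  also have "\<dots> = (if V \<subseteq> U then measure_pmf.prob Gd R / gauss_binom CARD('a) h d else 0)"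
    by simp
  finally show ?thesis unfolding d_def R_def .
qed

end
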